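(* Let $a\neq0$, $b>0$, $d$ be integers with $d$ not a perfect square, $\alpha=a+b^2\sqrt d$, $N_\alpha=a^2-b^4d$ not a perfect square, $\varepsilon=(t+u\sqrt d)/2$ in the ring of integers of $\mathbb{Q}(\sqrt d)$ with $t,u$ nonzero integers, and let $x\ne0$, $y>0$ be integers with $x+y^2\sqrt d=\alpha\varepsilon^2$. Let $r_1=tb^2+au\pm2by$ (for either choice of sign) and $s_1'=-u\sqrt{N_\alpha/\operatorname{core}(N_\alpha)}$. Then $\gcd\big(4b^2r_1/\operatorname{core}(r_1),\,r_1^2\big)$ divides $s_1'^2$.
   Context: For a nonzero integer $n$, $\operatorname{core}(n)$ is the unique squarefree integer with $n/\operatorname{core}(n)$ a perfect square, $\operatorname{core}(1)=1$. Note $N_\alpha/\operatorname{core}(N_\alpha)$ is a positive perfect square, so $s_1'$ is an integer. *)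

theory Defs
  imports Complex_Main "HOL-Computational_Algebra.Polynomial" "HOL-Computational_Algebra.Squarefree"
begin

definition core :: "int \<Rightarrow> int" where
  "core n = (THE c. squarefree c \<and> (\<exists>k::int. n = c * k^2))"

definition is_square :: "int \<Rightarrow> bool" where
  "is_square n \<longleftrightarrow> (\<exists>k::int. n = k^2)"

end

theory Submission
  imports Defs
begin

text \<open>
  Comparing the coefficients of \<open>\<surd>d\<close> in \<open>x + y\<^sup>2\<surd>d = \<alpha>\<epsilon>\<^sup>2\<close> gives
  \<open>4y\<^sup>2 = 2atu + b\<^sup>2(t\<^sup>2 + u\<^sup>2d)\<close>. With the conjugate \<open>r' = tb\<^sup>2 + au \<mp> 2by\<close> this
  yields \<open>r\<^sub>1 r' = u\<^sup>2 N\<^sub>\<alpha>\<close>, and integrality of \<open>\<epsilon>\<close> (\<open>4 | t\<^sup>2 - u\<^sup>2d\<close>) yields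
  \<open>(2y)\<^sup>2 \<equiv> t(r\<^sub>1 + r') mod (2b)\<^sup>2\<close>. Writing \<open>r\<^sub>1 = core(r\<^sub>1) k\<^sup>2\<close> and \<open>N\<^sub>\<alpha> = core(N\<^sub>\<alpha>) m\<^sup>2\<close>,
  the claim becomes \<open>gcd(2bk, r\<^sub>1) | um\<close>, which is checked one prime \<open>p\<close> at a time.
  If \<open>v\<^sub>p(r\<^sub>1) \<le> v\<^sub>p(r')\<close>, then \<open>2v\<^sub>p(r\<^sub>1) \<le> v\<^sub>p(core N\<^sub>\<alpha>) + 2v\<^sub>p(um)\<close> with a
  squarefree core, so \<open>v\<^sub>p(r\<^sub>1) \<le> v\<^sub>p(um)\<close>. Otherwise \<open>r\<^sub>1 - r' = \<plusminus>4by\<close> forces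
  \<open>v\<^sub>p(2b) + v\<^sub>p(2y) \<le> v\<^sub>p(r')\<close>, the congruence forces \<open>v\<^sub>p(2b) \<le> v\<^sub>p(2y)\<close>, and together
  they give \<open>v\<^sub>p(2bk) \<le> v\<^sub>p(um)\<close>.
\<close>

lemma of_int_add_mult_csqrt_eq_0_iff:
  fixes L K d :: int
  assumes "\<not> is_square d"
  shows "of_int L + of_int K * csqrt (of_int d) = (0::complex) \<longleftrightarrow> L = 0 \<and> K = 0"
proof
  assume eq: "of_int L + of_int K * csqrt (of_int d) = (0::complex)"
  have "K = 0"
  proof (rule ccontr)
    assume K: "K \<noteq> 0"
    hence "csqrt (of_int d) = - of_int L / (of_int K :: complex)"
      using eq by (simp add: field_simps add_eq_0_iff)
    hence "(of_int d :: complex) = of_int L ^ 2 / of_int K ^ 2"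
      by (metis power2_csqrt power_divide power2_minus)
    hence "of_int (d * K^2) = (of_int (L^2) :: complex)"
      using K by (simp add: field_simps)
    hence "d * K^2 = L^2" by (simp only: of_int_eq_iff)
    hence "K^2 dvd L^2" by (metis dvd_triv_right)
    hence "K dvd L" by simp
    then obtain m where "L = K * m" ..
    with \<open>d * K^2 = L^2\<close> K have "d = m^2" by (simp add: power_mult_distrib)
    thus False using assms unfolding is_square_def by blast
  qed
  with eq show "L = 0 \<and> K = 0" by simp
qed simp

lemma csqrt_coeff_eq_if_eq_mult_half_square:
  fixes a b t u d x y :: int
  assumes "\<not> is_square d"
    and "of_int x + of_int y * csqrt (of_int d) =
           (of_int a + of_int b * csqrt (of_int d)) * ((of_int t + of_int u * csqrt (of_int d)) / 2) ^ 2"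
  shows "4 * y = 2 * a * t * u + b * (t^2 + u^2 * d)"
proof -
  define s where "s = csqrt (of_int d :: complex)"
  have s2: "s^2 = of_int d" unfolding s_def by simp
  have "of_int (4 * x) + of_int (4 * y) * s = (of_int a + of_int b * s) * (of_int t + of_int u * s)^2"
    using assms(2) unfolding s_def by (simp add: power_divide field_simps)
  also have "\<dots> = of_int (a * (t^2 + u^2 * d) + 2 * t * u * b * d)
      + of_int (2 * a * t * u + b * (t^2 + u^2 * d)) * s"
    by (simp add: algebra_simps power2_eq_square power3_eq_cube flip: s2)
  finally have "of_int (4 * x - (a * (t^2 + u^2 * d) + 2 * t * u * b * d))
      + of_int (4 * y - (2 * a * t * u + b * (t^2 + u^2 * d))) * s = 0"
    by (simp add: algebra_simps)
  hence "4 * y - (2 * a * t * u + b * (t^2 + u^2 * d)) = 0"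
    unfolding s_def of_int_add_mult_csqrt_eq_0_iff[OF assms(1)] by simp
  thus ?thesis by simp
qed

lemma map_poly_of_int_add:
  "map_poly (of_int :: int \<Rightarrow> 'a::comm_ring_1) (p + q) = map_poly of_int p + map_poly of_int q"
  by (intro poly_eqI) (simp add: coeff_map_poly)

lemma map_poly_of_int_mult:
  "map_poly (of_int :: int \<Rightarrow> 'a::comm_ring_1) (p * q) = map_poly of_int p * map_poly of_int q"
  by (induction p) (simp_all add: map_poly_pCons map_poly_of_int_add map_poly_smult)

lemma lead_coeff_dvd_content_if_mult_eq_smult_monic:
  fixes Q D P :: "int poly"
  assumes eq: "Q * D = smult c P" and P: "lead_coeff P = 1" and c: "c \<noteq> 0"
  shows "lead_coeff Q dvd content Q"
proof -
  have "content P dvd 1" using content_dvd_coeff[of P "degree P"] P by simp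
  hence "content P = 1" using is_unit_content_iff by blast
  hence contents: "content Q * content D = normalize c"
    using arg_cong[OF eq, of content] by (simp add: content_mult)
  have leads: "lead_coeff Q * lead_coeff D = c"
    using arg_cong[OF eq, of lead_coeff] P by (simp add: lead_coeff_mult)
  have "D \<noteq> 0" using leads c by auto
  obtain j where j: "lead_coeff D = content D * j" using content_dvd_coeff[of D "degree D"] ..
  have "lead_coeff Q * j * content D dvd content Q * content D"
    using leads j contents by (simp add: mult_ac)
  hence "lead_coeff Q * j dvd content Q" using \<open>D \<noteq> 0\<close> by simp
  thus ?thesis by (rule dvd_mult_left)
qed

lemma int_poly_linear_root_eq_0:
  fixes R :: "int poly" and t u d :: int
  assumes "\<not> is_square d" "u \<noteq> 0" "degree R \<le> 1"
    and "poly (map_poly of_int R) ((of_int t + of_int u * csqrt (of_int d)) / 2 :: complex) = 0"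
  shows "R = 0"
proof -
  have R: "R = [:coeff R 0, coeff R 1:]"
    using assms(3) by (intro poly_eqI) (auto simp: coeff_pCons coeff_eq_0 split: nat.splits)
  have "of_int (2 * coeff R 0 + coeff R 1 * t) + of_int (coeff R 1 * u) * csqrt (of_int d) = (0::complex)"
    using assms(4) by (subst (asm) R) (simp add: map_poly_pCons field_simps)
  hence "coeff R 1 * u = 0" "2 * coeff R 0 + coeff R 1 * t = 0"
    by (simp_all only: of_int_add_mult_csqrt_eq_0_iff[OF assms(1)])
  with assms(2) R show ?thesis by simp
qed

lemma four_dvd_norm_if_algebraic_int:
  fixes t u d :: int
  assumes nsq: "\<not> is_square d" and u: "u \<noteq> 0"
    and ai: "algebraic_int ((of_int t + of_int u * csqrt (of_int d)) / 2 :: complex)"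
  shows "4 dvd t^2 - u^2 * d"
proof -
  define z :: complex where "z = (of_int t + of_int u * csqrt (of_int d)) / 2"
  obtain P :: "int poly" where Pz: "poly (map_poly of_int P) z = 0" and P: "lead_coeff P = 1"
    using ai unfolding z_def algebraic_int_altdef_ipoly by blast
  define Q :: "int poly" where "Q = [:t^2 - u^2 * d, -4 * t, 4:]"
  have Qz: "poly (map_poly of_int Q) z = 0"
  proof -
    have "poly (map_poly of_int Q) z = (2 * z - of_int t)^2 - of_int u ^ 2 * of_int d"
      unfolding Q_def by (simp add: map_poly_pCons algebra_simps power2_eq_square)
    also have "2 * z - of_int t = of_int u * csqrt (of_int d)" by (simp add: z_def field_simps)
    finally show ?thesis by (simp add: power_mult_distrib)
  qed
  text \<open>\<open>Q\<close> is 4 times the minimal polynomial of \<open>z\<close>: the pseudo-remainder of \<open>P\<close> modulo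
    \<open>Q\<close> vanishes at \<open>z\<close> and is therefore zero, and then Gauss' lemma applies.\<close>
  have Q0: "Q \<noteq> 0" and dQ: "degree Q = 2" and lQ: "lead_coeff Q = 4" by (simp_all add: Q_def)
  obtain D R where DR: "pseudo_divmod P Q = (D, R)" by fastforce
  define c :: int where "c = 4 ^ (Suc (degree P) - 2)"
  have div: "smult c P = Q * D + R" and "R = 0 \<or> degree R < 2"
    using pseudo_divmod[OF Q0 DR] dQ lQ by (simp_all add: c_def)
  hence "degree R \<le> 1" by auto
  moreover have "poly (map_poly of_int R) z = 0"
    using arg_cong[OF div, of "\<lambda>p. poly (map_poly of_int p) z"] Pz Qz
    by (simp add: map_poly_of_int_add map_poly_of_int_mult map_poly_smult)
  ultimately have "R = 0" using int_poly_linear_root_eq_0[OF nsq u] unfolding z_def by blast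
  hence "lead_coeff Q dvd content Q"
    using div P by (intro lead_coeff_dvd_content_if_mult_eq_smult_monic[of Q D c P]) (simp_all add: c_def)
  also have "content Q dvd coeff Q 0" by (rule content_dvd_coeff)
  finally show ?thesis by (simp add: Q_def lQ)
qed

lemma squarefree_part_unique:
  fixes c k n :: int
  assumes c: "squarefree c" and n: "n = c * k^2" "n \<noteq> 0"
  shows "squarefree_part n = c"
proof -
  have c0: "c \<noteq> 0" and k0: "k \<noteq> 0" using n by auto
  have "normalize (squarefree_part n) = normalize c"
  proof (rule multiplicity_eq_imp_eq)
    fix p :: int assume p: "prime p"
    hence pe: "prime_elem p" by (rule prime_imp_prime_elem)
    have "multiplicity p n = multiplicity p c + 2 * multiplicity p k"
      using n c0 k0 by (simp add: prime_elem_multiplicity_mult_distrib[OF pe]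
          prime_elem_multiplicity_power_distrib[OF pe])
    moreover have "multiplicity p c \<le> 1" using c c0 p squarefree_factorial_semiring'' by blast
    ultimately show "multiplicity p (squarefree_part n) = multiplicity p c"
      using p by (simp add: prime_multiplicity_squarefree_part)
  qed (use c0 in auto)
  hence "\<bar>squarefree_part n\<bar> = \<bar>c\<bar>" by simp
  moreover have "sgn (squarefree_part n) = sgn c"
  proof -
    have sq: "square_part n ^ 2 > 0" using n(2) by simp
    have k2: "k^2 > 0" using k0 by simp
    have "sgn (squarefree_part n) = sgn (squarefree_part n * square_part n ^ 2)"
      by (simp only: sgn_mult sgn_pos[OF sq] mult_1_right)
    also have "\<dots> = sgn n" by (rule arg_cong[OF squarefree_decompose[symmetric]])
    also have "\<dots> = sgn (c * k^2)" using n(1) by simp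
    also have "\<dots> = sgn c" using k0 by (simp only: sgn_mult sgn_pos[OF k2] mult_1_right)
    finally show ?thesis .
  qed
  ultimately show ?thesis using sgn_mult_abs[of c] sgn_mult_abs[of "squarefree_part n"] by argo
qed

lemma core_eq_squarefree_part:
  assumes "n \<noteq> 0"
  shows "core n = squarefree_part n"
  unfolding core_def
proof (rule the_equality)
  show "squarefree (squarefree_part n) \<and> (\<exists>k. n = squarefree_part n * k^2)"
    using squarefree_decompose[of n] by auto
next
  fix c assume "squarefree c \<and> (\<exists>k. n = c * k^2)"
  thus "c = squarefree_part n" using squarefree_part_unique assms by metis
qed

lemma gcd_dvd_of_product_eq_squarefree_mult_square:
  fixes r r' c w B Y t k :: int
  assumes k: "k^2 dvd r" and c: "squarefree c" and rr': "r * r' = c * w^2" and w: "w \<noteq> 0"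
    and B: "B \<noteq> 0" and Y: "Y \<noteq> 0"
    and diff: "B * Y dvd r - r'" and sum: "B^2 dvd t * (r + r') - Y^2"
  shows "gcd (B * k) r dvd w"
proof (rule multiplicity_le_imp_dvd)
  have c0: "c \<noteq> 0" using c by auto
  hence r0: "r \<noteq> 0" and r'0: "r' \<noteq> 0" using rr' w by auto
  hence k0: "k \<noteq> 0" using k by auto
  show "gcd (B * k) r \<noteq> 0" using r0 by simp
  fix p :: int assume p: "prime p"
  define v where "v = multiplicity p"
  have pe: "prime_elem p" using p by (rule prime_imp_prime_elem)
  have vmult: "v (x * z) = v x + v z" if "x \<noteq> 0" "z \<noteq> 0" for x z
    unfolding v_def using pe that by (rule prime_elem_multiplicity_mult_distrib)
  have vsq: "v (x^2) = 2 * v x" if "x \<noteq> 0" for x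
    unfolding v_def using pe that by (rule prime_elem_multiplicity_power_distrib)
  have dvd_iff: "p ^ j dvd x \<longleftrightarrow> j \<le> v x" if "x \<noteq> 0" for x j
    unfolding v_def using that p by (intro power_dvd_iff_le_multiplicity) auto
  have vk: "2 * v k \<le> v r"
    using dvd_imp_multiplicity_le[OF k r0, of p] vsq[OF k0] by (simp add: v_def)
  have vc: "v c \<le> 1"
    using c c0 p squarefree_factorial_semiring'' by (auto simp: v_def)
  have vrr': "v r + v r' = v c + 2 * v w"
    using arg_cong[OF rr', of v] r0 r'0 c0 w by (simp add: vmult vsq)
  have "v (gcd (B * k) r) = min (v B + v k) (v r)"
    using B k0 r0 p vmult[OF B k0] by (simp add: v_def multiplicity_gcd)
  also have "\<dots> \<le> v w"
  proof (cases "v r \<le> v r'")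
    case True
    thus ?thesis using vrr' vc by linarith
  next
    case False
    have "v B + v Y \<le> v r'"
    proof -
      have "r - r' \<noteq> 0" using False by auto
      hence "v (B * Y) \<le> v (r - r')" using diff by (simp add: v_def dvd_imp_multiplicity_le)
      also have "\<dots> = v r'"
        using False r0 r'0 multiplicity_sum_min[of p r "- r'"] by (simp add: v_def)
      finally show ?thesis using B Y by (simp add: vmult)
    qed
    moreover have "v B \<le> v Y"
    proof (rule ccontr)
      assume "\<not> ?thesis"
      hence "p ^ (2 * v Y + 1) dvd B^2"
        using B dvd_iff[of "B^2" "2 * v Y + 1"] vsq[OF B] by simp
      hence "p ^ (2 * v Y + 1) dvd t * (r + r') - Y^2" using sum by (rule dvd_trans)
      moreover have "p ^ (2 * v Y + 1) dvd t * (r + r')"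
      proof -
        have "p ^ (2 * v Y + 1) dvd p ^ (v B + v Y)"
          using \<open>\<not> v B \<le> v Y\<close> by (intro le_imp_power_dvd) simp
        moreover have "p ^ (v B + v Y) dvd r + r'"
          using \<open>v B + v Y \<le> v r'\<close> False r0 r'0 by (intro dvd_add) (simp_all add: dvd_iff)
        ultimately show ?thesis by (blast intro: dvd_trans dvd_mult)
      qed
      ultimately have "p ^ (2 * v Y + 1) dvd t * (r + r') - (t * (r + r') - Y^2)"
        by (rule dvd_diff[rotated])
      hence "p ^ (2 * v Y + 1) dvd Y^2" by simp
      thus False using Y dvd_iff[of "Y^2" "2 * v Y + 1"] vsq[OF Y] by simp
    qed
    ultimately show ?thesis using vrr' vc vk False by linarith
  qed
  finally show "multiplicity p (gcd (B * k) r) \<le> multiplicity p w" by (simp add: v_def)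
qed

theorem lemma3p2:
  fixes a b d t u x y \<sigma> :: int
  assumes "a \<noteq> 0" and "b > 0"
    and "\<not> is_square d"
    and "\<not> is_square (a^2 - b^4 * d)"
    and "t \<noteq> 0" and "u \<noteq> 0"
    and "algebraic_int ((of_int t + of_int u * csqrt (of_int d)) / 2 :: complex)"
    and "x \<noteq> 0" and "y > 0"
    and "of_int x + of_int (y^2) * csqrt (of_int d) =
           (of_int a + of_int (b^2) * csqrt (of_int d)) *
           ((of_int t + of_int u * csqrt (of_int d)) / 2) ^ 2"
    and "\<sigma> \<in> {1, -1}"
  shows "let N = a^2 - b^4 * d;
             r1 = t * b^2 + a * u + \<sigma> * 2 * b * y;
             s1' = - u * \<lfloor>sqrt (real_of_int (N div core N))\<rfloor>
         in gcd (4 * b^2 * r1 div core r1) (r1^2) dvd s1'^2"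
proof -
  define N where "N = a^2 - b^4 * d"
  define r where "r = t * b^2 + a * u + \<sigma> * 2 * b * y"
  define r' where "r' = t * b^2 + a * u - \<sigma> * 2 * b * y"
  define m where "m = square_part N"
  define k where "k = square_part r"
  have N0: "N \<noteq> 0" using assms(4) unfolding N_def is_square_def by (metis power_zero_numeral)
  have y2: "4 * y^2 = 2 * a * t * u + b^2 * (t^2 + u^2 * d)"
    using csqrt_coeff_eq_if_eq_mult_half_square[OF assms(3,10)] .
  obtain n where n: "t^2 - u^2 * d = 4 * n"
    using four_dvd_norm_if_algebraic_int[OF assms(3,6,7)] ..
  have "\<sigma>^2 = 1" using assms(11) by auto
  hence "r * r' = u^2 * N" unfolding r_def r'_def N_def using y2 by algebra
  also have "\<dots> = squarefree_part N * (u * m)^2"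
    by (subst squarefree_decompose[of N]) (simp add: m_def algebra_simps)
  finally have rr': "r * r' = squarefree_part N * (u * m)^2" .
  have "gcd (2 * b * k) r dvd u * m"
  proof (rule gcd_dvd_of_product_eq_squarefree_mult_square[OF _ _ rr'])
    show "(2 * b) * (2 * y) dvd r - r'" unfolding r_def r'_def by (simp add: algebra_simps)
    have "t * (r + r') - (2 * y)^2 = (2 * b)^2 * n"
      unfolding r_def r'_def using y2 n by algebra
    thus "(2 * b)^2 dvd t * (r + r') - (2 * y)^2" by simp
  qed (use assms(2,6,9) N0 in \<open>simp_all add: k_def m_def\<close>)
  hence "gcd ((2 * b * k)^2) (r^2) dvd (u * m)^2" by (simp add: dvd_power_same)
  moreover have "r \<noteq> 0" using rr' N0 assms(6) by (auto simp: m_def)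
  hence "4 * b^2 * r div core r = (2 * b * k)^2"
    by (subst (1) squarefree_decompose[of r]) (simp add: core_eq_squarefree_part k_def power_mult_distrib)
  moreover have "\<lfloor>sqrt (real_of_int (N div core N))\<rfloor> = \<bar>m\<bar>"
    using N0 by (subst (1) squarefree_decompose[of N]) (simp add: core_eq_squarefree_part m_def flip: of_int_abs)
  ultimately show ?thesis
    unfolding Let_def N_def[symmetric] r_def[symmetric] by (simp add: power_mult_distrib)
qed

end
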